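(* Let $\mathcal Z_{\mathcal S}=(X,(\phi_j)_{j=0}^{n-1},(\rho_j)_{j=0}^{n-1})$ be a Matkowski contractive GIFZS of degree $m$ on a metric space $X$, and let $\varphi_j$ be a witness for $\phi_j$, $j=0,\dots,n-1$. Then the operator $\mathcal Z_{\mathcal S}:(\mathcal F_X^* )^m\to\mathcal F_X^*$ is a generalized Matkowski contraction (with respect to $d_\infty^m$ and $d_\infty$) with witness $\varphi=\max_j\varphi_j$, i.e. $d_\infty(\mathcal Z_{\mathcal S}(u_0,\dots,u_{m-1}),\mathcal Z_{\mathcal S}(v_0,\dots,v_{m-1}))\le\varphi(\max_i d_\infty(u_i,v_i))$. In particular, if $\mathcal Z_{\mathcal S}$ is Lipschitz contractive, then the operator $\mathcal Z_{\mathcal S}$ is Lipschitz with constant at most $\max_j\mathrm{Lip}(\phi_j)<1$.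
   Context: A fuzzy subset of $X$ is $u:X\to[0,1]$. For $\alpha\in(0,1]$, $[u]^\alpha=\{x:u(x)\ge\alpha\}$, $[u]^0=\overline{\{x:u(x)>0\}}$. $\mathcal F_X^*$: fuzzy subsets that are normal ($u(x)=1$ for some $x$), usc, compactly supported ($[u]^0$ compact). $h$: Hausdorff metric; $d_\infty(u,v)=\sup_{\alpha\in[0,1]}h([u]^\alpha,[v]^\alpha)$; $d_\infty^m((u_i),(v_i))=\max_i d_\infty(u_i,v_i)$. $X^m$ carries the maximum metric $d^m$. For $T:Z\to Y$, $T(u)(y)=\sup\{u(z):T(z)=y\}$ if $y\in T(Z)$, else $0$; $\rho(u)=\rho\circ u$; $(u_0\times\cdots\times u_{m-1})(x_0,\dots,x_{m-1})=\min_iu_i(x_i)$; $\vee$ is pointwise max. A grey level map is a non-identically-zero $\rho:[0,1]\to[0,1]$; a family $(\rho_j)_{j=0}^{n-1}$ is admissible if each $\rho_j$ is nondecreasing and right continuous, $\rho_j(0)=0$ for all $j$, and $\rho_j(1)=1$ for some $j$. A map $f:M^m\to M$ (or between metric spaces) is a generalized Matkowski contraction if there is a nondecreasing $\varphi:[0,\infty)\to[0,\infty)$ with $\varphi^{(k)}(t)\to0$ for every $t>0$ ($k$-th iterate) such that $d(f(x),f(y))\le\varphi(d^m(x,y))$; $\varphi$ is a witness. A GIFS of degree $m$ is $\mathcal S=(X,(\phi_j)_{j=0}^{n-1})$ with continuous $\phi_j:X^m\to X$; a GIFZS of degree $m$ is $(X,(\phi_j),(\rho_j))$ with $(X,(\phi_j))$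 a GIFS of degree $m$ and $(\rho_j)$ admissible; it is Matkowski (resp. Lipschitz) contractive if every $\phi_j$ is a generalized Matkowski contraction (resp. $\mathrm{Lip}(\phi_j)<1$). Its operator is $\mathcal Z_{\mathcal S}(u_0,\dots,u_{m-1})=\bigvee_j\rho_j(\phi_j(u_0\times\cdots\times u_{m-1}))$. *)

theory Defs
  imports "HOL-Analysis.Analysis"
begin

definition hausdorff_dist :: "'a::metric_space set \<Rightarrow> 'a set \<Rightarrow> real" where
  "hausdorff_dist A B = max (SUP a\<in>A. infdist a B) (SUP b\<in>B. infdist b A)"

definition alpha_cut :: "('a::topological_space \<Rightarrow> real) \<Rightarrow> real \<Rightarrow> 'a set" where
  "alpha_cut u \<alpha> = (if \<alpha> = 0 then closure {x. u x > 0} else {x. \<alpha> \<le> u x})"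

definition fuzzy_set :: "('a \<Rightarrow> real) \<Rightarrow> bool" where
  "fuzzy_set u \<longleftrightarrow> (\<forall>x. 0 \<le> u x \<and> u x \<le> 1)"

definition usc :: "('a::topological_space \<Rightarrow> real) \<Rightarrow> bool" where
  "usc u \<longleftrightarrow> (\<forall>a. closed {x. a \<le> u x})"

definition FX_star :: "('a::metric_space \<Rightarrow> real) set" where
  "FX_star = {u. fuzzy_set u \<and> (\<exists>x. u x = 1) \<and> usc u \<and> compact (alpha_cut u 0)}"

definition d_inf :: "('a::metric_space \<Rightarrow> real) \<Rightarrow> ('a \<Rightarrow> real) \<Rightarrow> real" where
  "d_inf u v = (SUP \<alpha>\<in>{0..1}. hausdorff_dist (alpha_cut u \<alpha>) (alpha_cut v \<alpha>))"

(* X^m is modelled as 'm \<Rightarrow> 'a with a finite index type 'm of cardinality m *)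
definition d_m :: "('m::finite \<Rightarrow> 'a::metric_space) \<Rightarrow> ('m \<Rightarrow> 'a) \<Rightarrow> real" where
  "d_m x y = Max (range (\<lambda>i. dist (x i) (y i)))"

definition d_inf_m :: "('m::finite \<Rightarrow> 'a::metric_space \<Rightarrow> real) \<Rightarrow> ('m \<Rightarrow> 'a \<Rightarrow> real) \<Rightarrow> real" where
  "d_inf_m u v = Max (range (\<lambda>i. d_inf (u i) (v i)))"

definition cont_m :: "(('m::finite \<Rightarrow> 'a::metric_space) \<Rightarrow> 'a) \<Rightarrow> bool" where
  "cont_m f \<longleftrightarrow> (\<forall>x. \<forall>e>0. \<exists>d>0. \<forall>y. d_m x y < d \<longrightarrow> dist (f x) (f y) < e)"

definition matkowski_fun :: "(real \<Rightarrow> real) \<Rightarrow> bool" where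
  "matkowski_fun \<phi> \<longleftrightarrow> mono_on {0..} \<phi> \<and> (\<forall>t\<ge>0. 0 \<le> \<phi> t) \<and>
     (\<forall>t>0. (\<lambda>k. (\<phi> ^^ k) t) \<longlonglongrightarrow> 0)"

definition matkowski_witness_m :: "(real \<Rightarrow> real) \<Rightarrow> (('m::finite \<Rightarrow> 'a::metric_space) \<Rightarrow> 'a) \<Rightarrow> bool" where
  "matkowski_witness_m \<phi> f \<longleftrightarrow> matkowski_fun \<phi> \<and> (\<forall>x y. dist (f x) (f y) \<le> \<phi> (d_m x y))"

definition lipschitz_m :: "(('m::finite \<Rightarrow> 'a::metric_space) \<Rightarrow> 'a) \<Rightarrow> bool" where
  "lipschitz_m f \<longleftrightarrow> (\<exists>L\<ge>0. \<forall>x y. dist (f x) (f y) \<le> L * d_m x y)"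

definition Lip_m :: "(('m::finite \<Rightarrow> 'a::metric_space) \<Rightarrow> 'a) \<Rightarrow> real" where
  "Lip_m f = Inf {L. 0 \<le> L \<and> (\<forall>x y. dist (f x) (f y) \<le> L * d_m x y)}"

definition admissible :: "nat \<Rightarrow> (nat \<Rightarrow> real \<Rightarrow> real) \<Rightarrow> bool" where
  "admissible n \<rho> \<longleftrightarrow>
     (\<forall>j<n. (\<forall>t\<in>{0..1}. 0 \<le> \<rho> j t \<and> \<rho> j t \<le> 1) \<and> (\<exists>t\<in>{0..1}. \<rho> j t \<noteq> 0)
        \<and> mono_on {0..1} (\<rho> j)
        \<and> (\<forall>t\<in>{0..<1}. (\<rho> j \<longlongrightarrow> \<rho> j t) (at_right t))
        \<and> \<rho> j 0 = 0)
     \<and> (\<exists>j<n. \<rho> j 1 = 1)"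

definition zadeh_ext :: "('z \<Rightarrow> 'y) \<Rightarrow> ('z \<Rightarrow> real) \<Rightarrow> 'y \<Rightarrow> real" where
  "zadeh_ext T u y = (if y \<in> range T then Sup {u z | z. T z = y} else 0)"

definition fuzzy_prod :: "('m::finite \<Rightarrow> 'a \<Rightarrow> real) \<Rightarrow> ('m \<Rightarrow> 'a) \<Rightarrow> real" where
  "fuzzy_prod u x = Min (range (\<lambda>i. u i (x i)))"

definition gifzs_op :: "nat \<Rightarrow> (nat \<Rightarrow> ('m::finite \<Rightarrow> 'a) \<Rightarrow> 'a) \<Rightarrow> (nat \<Rightarrow> real \<Rightarrow> real)
    \<Rightarrow> ('m \<Rightarrow> 'a \<Rightarrow> real) \<Rightarrow> 'a \<Rightarrow> real" where
  "gifzs_op n \<phi> \<rho> u y = Max ((\<lambda>j. \<rho> j (zadeh_ext (\<phi> j) (fuzzy_prod u) y)) ` {..<n})"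

end

theory Submission
  imports Defs
begin

text \<open>Fix \<open>\<alpha> > 0\<close> and \<open>y\<close> with \<open>Z(u)(y) \<ge> \<alpha>\<close>, and pick \<open>j\<close> with \<open>\<rho>\<^sub>j(\<beta>) \<ge> \<alpha>\<close>, where
  \<open>\<beta> = \<phi>\<^sub>j(u\<^sub>0 \<times> \<dots> \<times> u\<^sub>m\<^sub>-\<^sub>1)(y) > 0\<close>. Upper semicontinuity and compact supports make the
  supremum defining \<open>\<beta>\<close> attained at some \<open>x\<close> with \<open>\<phi>\<^sub>j(x) = y\<close> and \<open>u\<^sub>i(x\<^sub>i) \<ge> \<beta>\<close>. Each \<open>x\<^sub>i\<close> lies
  in the \<open>\<beta>\<close>-cut of \<open>u\<^sub>i\<close>, which is within Hausdorff distance \<open>d\<^sub>\<infinity>(u\<^sub>i,v\<^sub>i)\<close> of the \<open>\<beta>\<close>-cut of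
  \<open>v\<^sub>i\<close>; this gives \<open>z\<close> with \<open>v\<^sub>i(z\<^sub>i) \<ge> \<beta>\<close> and \<open>d\<^sup>m(x,z) \<le> d\<^sub>\<infinity>\<^sup>m(u,v)\<close>. Then \<open>\<phi>\<^sub>j(z)\<close> lies in the
  \<open>\<alpha>\<close>-cut of \<open>Z(v)\<close> at distance at most \<open>\<psi>\<^sub>j(d\<^sub>\<infinity>\<^sup>m(u,v))\<close> from \<open>y\<close>. By symmetry this bounds the
  Hausdorff distance of all positive cuts, and the \<open>0\<close>-cut, being the closure of their union,
  follows by approximation. The maximum of finitely many Matkowski functions is again one,
  because Matkowski functions are characterised by \<open>\<psi>(t) < t\<close> together with
  \<open>\<forall>L > 0. \<exists>s > L. \<psi>(s) \<le> L\<close>.\<close>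

section \<open>Matkowski functions\<close>

lemma matkowski_fun_less:
  assumes m: "matkowski_fun \<psi>" and t: "0 < t"
  shows "\<psi> t < t"
proof (rule ccontr)
  assume "\<not> \<psi> t < t"
  hence ge: "t \<le> \<psi> t" by simp
  have mono: "mono_on {0..} \<psi>" and lim: "(\<lambda>k. (\<psi> ^^ k) t) \<longlonglongrightarrow> 0"
    using m t unfolding matkowski_fun_def by auto
  have "t \<le> (\<psi> ^^ k) t" for k
  proof (induction k)
    case (Suc k)
    have "\<psi> t \<le> \<psi> ((\<psi> ^^ k) t)" by (rule mono_onD[OF mono]) (use Suc t in auto)
    with ge show ?case by simp
  qed simp
  hence "t \<le> 0" using LIMSEQ_le_const[OF lim] by blast
  with t show False by simp
qed

lemma matkowski_fun_exists_le:
  assumes m: "matkowski_fun \<psi>" and L: "0 < L"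
  shows "\<exists>s>L. \<psi> s \<le> L"
proof (rule ccontr)
  assume "\<not> (\<exists>s>L. \<psi> s \<le> L)"
  hence gt: "\<And>s. L < s \<Longrightarrow> L < \<psi> s" by force
  have lim: "(\<lambda>k. (\<psi> ^^ k) (L + 1)) \<longlonglongrightarrow> 0"
    using m L unfolding matkowski_fun_def by auto
  have "L < (\<psi> ^^ k) (L + 1)" for k
    by (induction k) (auto intro: gt)
  hence "L \<le> 0" using LIMSEQ_le_const[OF lim] less_imp_le by blast
  with L show False by simp
qed

text \<open>Conversely, these two properties characterise Matkowski functions: the orbit of \<open>t\<close>
  decreases to some \<open>L \<ge> 0\<close>, and \<open>L > 0\<close> is impossible because an orbit point below the \<open>s\<close>
  with \<open>\<Phi> s \<le> L\<close> is mapped to \<open>L\<close> and the next one below \<open>L\<close>.\<close>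

lemma matkowski_funI:
  fixes \<Phi> :: "real \<Rightarrow> real"
  assumes mono: "mono_on {0..} \<Phi>" and nonneg: "\<And>t. 0 \<le> t \<Longrightarrow> 0 \<le> \<Phi> t"
    and less: "\<And>t. 0 < t \<Longrightarrow> \<Phi> t < t" and gap: "\<And>L. 0 < L \<Longrightarrow> \<exists>s>L. \<Phi> s \<le> L"
  shows "matkowski_fun \<Phi>"
  unfolding matkowski_fun_def
proof (intro conjI allI impI mono nonneg)
  fix t :: real assume t: "0 < t"
  have \<Phi>0: "\<Phi> 0 \<le> 0"
  proof (rule field_le_epsilon)
    fix e :: real assume "0 < e"
    hence "\<Phi> 0 \<le> \<Phi> e" "\<Phi> e < e" by (auto intro: mono_onD[OF mono] less)
    thus "\<Phi> 0 \<le> 0 + e" by simp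
  qed
  define a where "a k = (\<Phi> ^^ k) t" for k
  have a_Suc: "a (Suc k) = \<Phi> (a k)" for k unfolding a_def by simp
  have a_nonneg: "0 \<le> a k" for k
    by (induction k) (use t nonneg in \<open>auto simp: a_def\<close>)
  have "decseq a"
  proof (rule decseq_SucI)
    show "a (Suc k) \<le> a k" for k
      using a_Suc \<Phi>0 less[of "a k"] a_nonneg[of k] by (cases "a k = 0") auto
  qed
  then obtain L where L: "a \<longlonglongrightarrow> L" and L_le: "\<forall>k. L \<le> a k"
    using decseq_convergent a_nonneg by blast
  have "L = 0"
  proof (rule ccontr)
    assume "L \<noteq> 0"
    with LIMSEQ_le_const[OF L] a_nonneg have L_pos: "0 < L" by force
    then obtain s where s: "L < s" "\<Phi> s \<le> L" using gap by blast
    obtain k where "a k < s"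
      using order_tendstoD(2)[OF L s(1)] by (auto simp: eventually_sequentially)
    hence "a (Suc k) \<le> L" using s a_Suc mono_onD[OF mono, of "a k" s] a_nonneg[of k] by auto
    hence "a (Suc k) = L" using L_le by (meson order_antisym)
    hence "a (Suc (Suc k)) < L" using a_Suc less L_pos by simp
    with L_le show False by (meson not_le)
  qed
  with L show "(\<lambda>k. (\<Phi> ^^ k) t) \<longlonglongrightarrow> 0" unfolding a_def by simp
qed

lemma matkowski_fun_Max:
  assumes J: "finite J" "J \<noteq> {}" and \<psi>: "\<And>j. j \<in> J \<Longrightarrow> matkowski_fun (\<psi> j)"
  shows "matkowski_fun (\<lambda>t. Max ((\<lambda>j. \<psi> j t) ` J))"
proof (rule matkowski_funI)
  have mono: "mono_on {0..} (\<psi> j)" and nonneg: "\<And>t. 0 \<le> t \<Longrightarrow> 0 \<le> \<psi> j t" if "j \<in> J" for j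
    using \<psi>[OF that] unfolding matkowski_fun_def by blast+
  have Max_ge_\<psi>: "\<psi> j t \<le> Max ((\<lambda>j. \<psi> j t) ` J)" if "j \<in> J" for j t
    using J that by (intro Max_ge) auto
  show "mono_on {0..} (\<lambda>t. Max ((\<lambda>j. \<psi> j t) ` J))"
  proof (rule mono_onI)
    fix r s :: real assume rs: "r \<in> {0..}" "s \<in> {0..}" "r \<le> s"
    have "\<psi> j r \<le> Max ((\<lambda>j. \<psi> j s) ` J)" if "j \<in> J" for j
      using mono_onD[OF mono[OF that] rs] Max_ge_\<psi>[OF that, of s] by linarith
    with J show "Max ((\<lambda>j. \<psi> j r) ` J) \<le> Max ((\<lambda>j. \<psi> j s) ` J)" by (simp add: Max_le_iff)
  qed
  show "0 \<le> Max ((\<lambda>j. \<psi> j t) ` J)" if "0 \<le> t" for t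
  proof -
    obtain j where "j \<in> J" using J by blast
    with nonneg[OF this that] Max_ge_\<psi>[OF this, of t] show ?thesis by linarith
  qed
  show "Max ((\<lambda>j. \<psi> j t) ` J) < t" if "0 < t" for t
    using J \<psi> that by (simp add: Max_less_iff matkowski_fun_less)
  show "\<exists>s>L. Max ((\<lambda>j. \<psi> j s) ` J) \<le> L" if L: "0 < L" for L
  proof -
    obtain s' where s': "\<And>j. j \<in> J \<Longrightarrow> L < s' j \<and> \<psi> j (s' j) \<le> L"
      using matkowski_fun_exists_le[OF \<psi> L] by metis
    define s where "s = Min (s' ` J)"
    have "L < s" unfolding s_def using J s' by (simp add: Min_gr_iff)
    moreover have "\<psi> j s \<le> L" if j: "j \<in> J" for j
    proof -
      have "s \<le> s' j" unfolding s_def using J j by simp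
      hence "\<psi> j s \<le> \<psi> j (s' j)" by (intro mono_onD[OF mono[OF j]]) (use \<open>L < s\<close> L in auto)
      with s'[OF j] show ?thesis by simp
    qed
    ultimately show ?thesis using J by (auto simp: Max_le_iff)
  qed
qed

section \<open>The maximum metric on \<open>X\<^sup>m\<close>\<close>

lemma d_m_nonneg: "0 \<le> d_m x y"
proof -
  have "dist (x i) (y i) \<le> d_m x y" for i unfolding d_m_def by (rule Max_ge) auto
  thus ?thesis using zero_le_dist order_trans by blast
qed

lemma d_m_le_iff: "d_m x y \<le> D \<longleftrightarrow> (\<forall>i. dist (x i) (y i) \<le> D)"
  unfolding d_m_def by (subst Max_le_iff) auto

lemma tendsto_cont_m:
  fixes z :: "nat \<Rightarrow> 'm::finite \<Rightarrow> 'a::metric_space"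
  assumes f: "cont_m f" and z: "\<And>i. (\<lambda>k. z k i) \<longlonglongrightarrow> l i"
  shows "(\<lambda>k. f (z k)) \<longlonglongrightarrow> f l"
proof (rule tendstoI)
  fix e :: real assume "e > 0"
  then obtain d where d: "d > 0" and close: "\<And>y. d_m l y < d \<Longrightarrow> dist (f l) (f y) < e"
    using f unfolding cont_m_def by blast
  have "\<forall>\<^sub>F k in sequentially. \<forall>i. dist (z k i) (l i) < d"
    by (rule eventually_all_finite) (use z d tendstoD in blast)
  thus "\<forall>\<^sub>F k in sequentially. dist (f (z k)) (f l) < e"
  proof eventually_elim
    case (elim k)
    hence "d_m l (z k) < d" unfolding d_m_def by (simp add: Max_less_iff dist_commute)
    from close[OF this] show ?case by (simp add: dist_commute)
  qed
qed

lemma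
  assumes "lipschitz_m f"
  shows Lip_m_nonneg: "0 \<le> Lip_m f"
    and dist_le_Lip_m: "dist (f x) (f y) \<le> Lip_m f * d_m x y"
proof -
  define S where "S = {L. 0 \<le> L \<and> (\<forall>x y. dist (f x) (f y) \<le> L * d_m x y)}"
  have S: "S \<noteq> {}" using assms unfolding lipschitz_m_def S_def by auto
  have Lip: "Lip_m f = Inf S" unfolding Lip_m_def S_def ..
  show "0 \<le> Lip_m f" unfolding Lip using S by (intro cInf_greatest) (auto simp: S_def)
  show "dist (f x) (f y) \<le> Lip_m f * d_m x y"
  proof (cases "d_m x y = 0")
    case True
    obtain L where "L \<in> S" using S by blast
    hence "dist (f x) (f y) \<le> L * d_m x y" unfolding S_def by blast
    with True show ?thesis by simp
  next
    case False
    hence d_pos: "0 < d_m x y" using d_m_nonneg[of x y] by simp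
    have "dist (f x) (f y) / d_m x y \<le> Inf S"
      using S d_pos by (intro cInf_greatest) (auto simp: S_def divide_le_eq)
    with d_pos Lip show ?thesis by (simp add: divide_le_eq)
  qed
qed

lemma compact_product_subseq:
  fixes x :: "nat \<Rightarrow> 'm::finite \<Rightarrow> 'a::metric_space"
  assumes K: "\<And>i. compact (K i)" and x: "\<And>k i. x k i \<in> K i"
  obtains r l where "strict_mono r" "\<And>i. (\<lambda>k. x (r k) i) \<longlonglongrightarrow> l i"
proof -
  have "\<exists>r l. strict_mono r \<and> (\<forall>i\<in>I. (\<lambda>k. x (r k) i) \<longlonglongrightarrow> l i)" if "finite I" for I
    using that
  proof (induction I rule: finite_induct)
    case empty
    show ?case by (rule exI[of _ id]) (simp add: strict_mono_def)
  next
    case (insert i I)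
    then obtain r l where r: "strict_mono r" and l: "\<forall>j\<in>I. (\<lambda>k. x (r k) j) \<longlonglongrightarrow> l j"
      by blast
    have "seq_compact (K i)" using K compact_eq_seq_compact_metric by blast
    then obtain r' li where r': "strict_mono r'" and li: "((\<lambda>k. x (r k) i) \<circ> r') \<longlonglongrightarrow> li"
      unfolding seq_compact_def using x by metis
    have "(\<lambda>k. x (r (r' k)) j) \<longlonglongrightarrow> (l(i := li)) j" if "j \<in> insert i I" for j
      using that li l LIMSEQ_subseq_LIMSEQ[OF _ r'] by (cases "j = i") (auto simp: o_def)
    moreover have "strict_mono (\<lambda>k. r (r' k))" using strict_mono_o[OF r r'] by (simp add: o_def)
    ultimately show ?case by (intro exI[of _ "\<lambda>k. r (r' k)"] exI[of _ "l(i := li)"]) auto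
  qed
  from this[of UNIV] that show ?thesis by auto
qed

lemma compact_image_cont_m:
  fixes f :: "('m::finite \<Rightarrow> 'a::metric_space) \<Rightarrow> 'a"
  assumes f: "cont_m f" and K: "\<And>i. compact (K i)"
  shows "compact (f ` {x. \<forall>i. x i \<in> K i})"
  unfolding compact_eq_seq_compact_metric seq_compact_def
proof (intro allI impI)
  fix s :: "nat \<Rightarrow> 'a" assume "\<forall>k. s k \<in> f ` {x. \<forall>i. x i \<in> K i}"
  hence "\<forall>k. \<exists>z. (\<forall>i. z i \<in> K i) \<and> s k = f z" by blast
  hence "\<exists>x. \<forall>k. (\<forall>i. x k i \<in> K i) \<and> s k = f (x k)" by (rule choice)
  then obtain x where x_s: "\<forall>k. (\<forall>i. x k i \<in> K i) \<and> s k = f (x k)" ..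
  hence x: "\<And>k i. x k i \<in> K i" and s: "\<And>k. s k = f (x k)" by simp_all
  obtain r l where r: "strict_mono r" and l: "\<And>i. (\<lambda>k. x (r k) i) \<longlonglongrightarrow> l i"
    using compact_product_subseq[of K x, OF K x] by blast
  have "l i \<in> K i" for i
    using compact_imp_closed[OF K] x by (intro closed_sequentially[OF _ _ l]) auto
  moreover have "(s \<circ> r) \<longlonglongrightarrow> f l" using tendsto_cont_m[OF f l] by (simp add: o_def s)
  ultimately show "\<exists>l\<in>f ` {x. \<forall>i. x i \<in> K i}. \<exists>r. strict_mono r \<and> (s \<circ> r) \<longlonglongrightarrow> l"
    using r by blast
qed

section \<open>Fuzzy sets and their level sets\<close>

lemma FX_starD:
  assumes "u \<in> FX_star"
  shows "\<And>x. 0 \<le> u x" "\<And>x. u x \<le> 1" "\<exists>x. u x = 1" "usc u" "compact (alpha_cut u 0)"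
  using assms unfolding FX_star_def fuzzy_set_def by auto

lemma alpha_cut_pos: "\<alpha> \<noteq> 0 \<Longrightarrow> alpha_cut u \<alpha> = {x. \<alpha> \<le> u x}"
  unfolding alpha_cut_def by simp

lemma alpha_cut_0: "alpha_cut u 0 = closure {x. 0 < u x}"
  unfolding alpha_cut_def by simp

lemma mem_alpha_cut_0: "0 < u x \<Longrightarrow> x \<in> alpha_cut u 0"
  using closure_subset[of "{x. 0 < u x}"] by (auto simp: alpha_cut_0)

lemma alpha_cut_subset_alpha_cut_0: "0 \<le> \<alpha> \<Longrightarrow> alpha_cut u \<alpha> \<subseteq> alpha_cut u 0"
  by (cases "\<alpha> = 0") (auto simp: alpha_cut_pos intro: mem_alpha_cut_0)

lemma compact_alpha_cut:
  assumes u: "u \<in> FX_star" and "0 \<le> \<alpha>"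
  shows "compact (alpha_cut u \<alpha>)"
proof (cases "\<alpha> = 0")
  case True
  with FX_starD(5)[OF u] show ?thesis by simp
next
  case False
  hence "alpha_cut u \<alpha> = alpha_cut u 0 \<inter> {x. \<alpha> \<le> u x}"
    using alpha_cut_subset_alpha_cut_0[of \<alpha> u] \<open>0 \<le> \<alpha>\<close> by (auto simp: alpha_cut_pos)
  with FX_starD(4,5)[OF u] show ?thesis by (simp add: compact_Int_closed usc_def)
qed

lemma alpha_cut_nonempty:
  assumes u: "u \<in> FX_star" and "\<alpha> \<le> 1"
  shows "alpha_cut u \<alpha> \<noteq> {}"
proof -
  obtain x where "u x = 1" using FX_starD(3)[OF u] by blast
  with \<open>\<alpha> \<le> 1\<close> have "x \<in> alpha_cut u \<alpha>"
    by (cases "\<alpha> = 0") (auto simp: alpha_cut_pos intro: mem_alpha_cut_0)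
  thus ?thesis by blast
qed

lemma bounded_alpha_cut: "u \<in> FX_star \<Longrightarrow> 0 \<le> \<alpha> \<Longrightarrow> bounded (alpha_cut u \<alpha>)"
  by (simp add: compact_alpha_cut compact_imp_bounded)

section \<open>Hausdorff distance and the metric \<open>d\<^sub>\<infinity>\<close>\<close>

lemma infdist_le_diameter:
  assumes "a \<in> C" "B \<noteq> {}" "B \<subseteq> C" "bounded C"
  shows "infdist a B \<le> diameter C"
proof -
  obtain b where b: "b \<in> B" using assms by auto
  have "infdist a B \<le> dist a b" by (rule infdist_le[OF b])
  also have "\<dots> \<le> diameter C" using assms b by (intro diameter_bounded_bound) auto
  finally show ?thesis .
qed

lemma hausdorff_dist_le:
  assumes "A \<noteq> {}" "B \<noteq> {}"
    and "\<And>a. a \<in> A \<Longrightarrow> infdist a B \<le> c" and "\<And>b. b \<in> B \<Longrightarrow> infdist b A \<le> c"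
  shows "hausdorff_dist A B \<le> c"
  unfolding hausdorff_dist_def using assms by (auto intro!: cSUP_least)

lemma hausdorff_dist_le_diameter:
  assumes "A \<noteq> {}" "B \<noteq> {}" "bounded (A \<union> B)"
  shows "hausdorff_dist A B \<le> diameter (A \<union> B)"
  using assms by (intro hausdorff_dist_le) (auto intro!: infdist_le_diameter)

lemma infdist_le_hausdorff_dist:
  assumes "a \<in> A" "B \<noteq> {}" "bounded (A \<union> B)"
  shows "infdist a B \<le> hausdorff_dist A B"
proof -
  have "bdd_above ((\<lambda>a. infdist a B) ` A)"
    using assms by (intro bdd_aboveI[of _ "diameter (A \<union> B)"]) (auto intro!: infdist_le_diameter)
  from cSUP_upper[OF assms(1) this] show ?thesis unfolding hausdorff_dist_def by simp
qed

lemma hausdorff_dist_commute: "hausdorff_dist A B = hausdorff_dist B A"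
  unfolding hausdorff_dist_def by (simp add: max.commute)

lemma d_inf_commute: "d_inf u v = d_inf v u"
  unfolding d_inf_def by (simp add: hausdorff_dist_commute)

lemma d_inf_m_commute: "d_inf_m u v = d_inf_m v u"
  unfolding d_inf_m_def by (simp add: d_inf_commute)

lemma hausdorff_dist_le_d_inf:
  assumes u: "u \<in> FX_star" and v: "v \<in> FX_star" and \<alpha>: "\<alpha> \<in> {0..1}"
  shows "hausdorff_dist (alpha_cut u \<alpha>) (alpha_cut v \<alpha>) \<le> d_inf u v"
proof -
  let ?C = "alpha_cut u 0 \<union> alpha_cut v 0"
  have "hausdorff_dist (alpha_cut u \<beta>) (alpha_cut v \<beta>) \<le> diameter ?C" if "\<beta> \<in> {0..1}" for \<beta>
  proof -
    have "alpha_cut u \<beta> \<union> alpha_cut v \<beta> \<subseteq> ?C"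
      using that alpha_cut_subset_alpha_cut_0 by fastforce
    with that u v show ?thesis
      by (intro order_trans[OF hausdorff_dist_le_diameter diameter_subset])
         (auto simp: alpha_cut_nonempty bounded_alpha_cut)
  qed
  hence "bdd_above ((\<lambda>\<beta>. hausdorff_dist (alpha_cut u \<beta>) (alpha_cut v \<beta>)) ` {0..1})"
    by (intro bdd_aboveI[of _ "diameter ?C"]) auto
  with \<alpha> show ?thesis unfolding d_inf_def by (rule cSUP_upper)
qed

lemma d_inf_nonneg:
  assumes "u \<in> FX_star" "v \<in> FX_star"
  shows "0 \<le> d_inf u v"
proof -
  obtain a where a: "a \<in> alpha_cut u 1" using alpha_cut_nonempty[OF assms(1), of 1] by auto
  have "0 \<le> infdist a (alpha_cut v 1)" by (rule infdist_nonneg)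
  also have "\<dots> \<le> hausdorff_dist (alpha_cut u 1) (alpha_cut v 1)"
    using assms by (intro infdist_le_hausdorff_dist[OF a]) (auto simp: alpha_cut_nonempty bounded_alpha_cut)
  also have "\<dots> \<le> d_inf u v" using assms by (intro hausdorff_dist_le_d_inf) auto
  finally show ?thesis .
qed

lemma d_inf_le_d_inf_m: "d_inf (u i) (v i) \<le> d_inf_m u v"
  unfolding d_inf_m_def by (rule Max_ge) auto

lemma d_inf_m_nonneg:
  assumes "\<And>i. u i \<in> FX_star" "\<And>i. v i \<in> FX_star"
  shows "0 \<le> d_inf_m u v"
  by (rule order_trans[OF d_inf_nonneg[OF assms] d_inf_le_d_inf_m])

lemma alpha_cut_approx:
  assumes u: "u \<in> FX_star" and v: "v \<in> FX_star" and \<alpha>: "\<alpha> \<in> {0..1}" and x: "x \<in> alpha_cut u \<alpha>"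
  shows "\<exists>z\<in>alpha_cut v \<alpha>. dist x z \<le> d_inf u v"
proof -
  have ne: "alpha_cut v \<alpha> \<noteq> {}" using alpha_cut_nonempty[OF v] \<alpha> by simp
  have "compact (alpha_cut v \<alpha>)" using compact_alpha_cut[OF v] \<alpha> by simp
  moreover have "continuous_on (alpha_cut v \<alpha>) (\<lambda>w. dist x w)" by (intro continuous_intros)
  ultimately obtain z where z: "z \<in> alpha_cut v \<alpha>"
    and min: "\<And>w. w \<in> alpha_cut v \<alpha> \<Longrightarrow> dist x z \<le> dist x w"
    using continuous_attains_inf[OF _ ne] by blast
  have "dist x z \<le> infdist x (alpha_cut v \<alpha>)"
    unfolding infdist_def using ne min by (auto intro!: cINF_greatest)
  also have "\<dots> \<le> hausdorff_dist (alpha_cut u \<alpha>) (alpha_cut v \<alpha>)"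
    using u v \<alpha> by (intro infdist_le_hausdorff_dist[OF x ne]) (simp add: bounded_alpha_cut)
  also have "\<dots> \<le> d_inf u v" by (rule hausdorff_dist_le_d_inf[OF u v \<alpha>])
  finally show ?thesis using z by blast
qed

lemma infdist_alpha_cut_0_le:
  assumes W: "W \<in> FX_star" and w_le_1: "\<And>z. w z \<le> 1"
    and pos_cuts: "\<And>\<alpha> z. 0 < \<alpha> \<Longrightarrow> z \<in> alpha_cut w \<alpha> \<Longrightarrow> infdist z (alpha_cut W \<alpha>) \<le> c"
    and y: "y \<in> alpha_cut w 0"
  shows "infdist y (alpha_cut W 0) \<le> c"
proof (rule field_le_epsilon)
  fix e :: real assume "0 < e"
  with y obtain y' where y': "0 < w y'" "dist y y' < e"
    unfolding alpha_cut_0 by (auto dest: closure_approachableD)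
  have "infdist y (alpha_cut W 0) \<le> infdist y' (alpha_cut W 0) + dist y y'"
    by (rule infdist_triangle)
  also have "infdist y' (alpha_cut W 0) \<le> infdist y' (alpha_cut W (w y'))"
    using y'(1) w_le_1 alpha_cut_nonempty[OF W]
    by (intro infdist_mono alpha_cut_subset_alpha_cut_0) auto
  also have "\<dots> \<le> c" using y'(1) by (intro pos_cuts) (auto simp: alpha_cut_pos)
  finally show "infdist y (alpha_cut W 0) \<le> c + e" using y'(2) by simp
qed

section \<open>Products and Zadeh extensions\<close>

lemma fuzzy_prod_ge_iff: "b \<le> fuzzy_prod u x \<longleftrightarrow> (\<forall>i. b \<le> u i (x i))"
  unfolding fuzzy_prod_def by (subst Min_ge_iff) auto

lemma fuzzy_prod_le: "fuzzy_prod u x \<le> u i (x i)"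
  unfolding fuzzy_prod_def by (rule Min_le) auto

lemma fuzzy_prod_bounds:
  assumes "\<And>i. u i \<in> FX_star"
  shows "0 \<le> fuzzy_prod u x" "fuzzy_prod u x \<le> 1"
proof -
  show "0 \<le> fuzzy_prod u x" using FX_starD(1)[OF assms] by (simp add: fuzzy_prod_ge_iff)
  show "fuzzy_prod u x \<le> 1"
    using fuzzy_prod_le[of u x undefined] FX_starD(2)[OF assms, of undefined "x undefined"] by linarith
qed

lemma fuzzy_prod_ge_of_tendsto:
  fixes z :: "nat \<Rightarrow> 'm::finite \<Rightarrow> 'a::metric_space"
  assumes usc: "\<And>i. usc (u i)" and z: "\<And>i. (\<lambda>k. z k i) \<longlonglongrightarrow> l i"
    and t: "(\<lambda>k. fuzzy_prod u (z k)) \<longlonglongrightarrow> t"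
  shows "t \<le> fuzzy_prod u l"
  unfolding fuzzy_prod_ge_iff
proof
  fix i
  show "t \<le> u i (l i)"
  proof (rule dense_le)
    fix a assume "a < t"
    from order_tendstoD(1)[OF t this] have "\<forall>\<^sub>F k in sequentially. z k i \<in> {x. a \<le> u i x}"
      by eventually_elim (auto intro: order_trans[OF less_imp_le fuzzy_prod_le])
    from Lim_in_closed_set[OF _ this _ z] usc show "a \<le> u i (l i)" by (simp add: usc_def)
  qed
qed

lemma zadeh_ext_bounds:
  assumes "\<And>x. 0 \<le> P x" "\<And>x. P x \<le> 1"
  shows "0 \<le> zadeh_ext f P y" "zadeh_ext f P y \<le> 1"
proof -
  have "0 \<le> Sup {P z | z. f z = y} \<and> Sup {P z | z. f z = y} \<le> 1" if "f x = y" for x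
  proof
    have "P x \<le> Sup {P z | z. f z = y}"
      using that assms by (intro cSup_upper) (auto intro!: bdd_aboveI[of _ 1])
    with assms(1)[of x] show "0 \<le> Sup {P z | z. f z = y}" by linarith
    show "Sup {P z | z. f z = y} \<le> 1" using that assms by (intro cSup_least) auto
  qed
  thus "0 \<le> zadeh_ext f P y" "zadeh_ext f P y \<le> 1" unfolding zadeh_ext_def by auto
qed

lemma zadeh_ext_ge:
  assumes "\<And>x. P x \<le> 1" "f x = y"
  shows "P x \<le> zadeh_ext f P y"
  using assms unfolding zadeh_ext_def by (auto intro!: cSup_upper bdd_aboveI[of _ 1])

lemma zadeh_ext_prod_bounds:
  assumes "\<And>i. u i \<in> FX_star"
  shows "0 \<le> zadeh_ext f (fuzzy_prod u) y" "zadeh_ext f (fuzzy_prod u) y \<le> 1"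
  using zadeh_ext_bounds[of "fuzzy_prod u"] fuzzy_prod_bounds[of u, OF assms] by auto

text \<open>Upper semicontinuity and compact supports make the supremum defining the Zadeh extension
  a maximum: a maximising sequence eventually lies in the compact product of the supports.\<close>

lemma zadeh_ext_attained:
  fixes f :: "('m::finite \<Rightarrow> 'a::metric_space) \<Rightarrow> 'a"
  assumes u: "\<And>i. u i \<in> FX_star" and f: "cont_m f"
    and pos: "0 < zadeh_ext f (fuzzy_prod u) y"
  obtains x where "f x = y" "fuzzy_prod u x = zadeh_ext f (fuzzy_prod u) y"
proof -
  define t where "t = zadeh_ext f (fuzzy_prod u) y"
  define S where "S = {fuzzy_prod u z | z. f z = y}"
  have "y \<in> range f" using pos unfolding zadeh_ext_def by (auto split: if_splits)
  hence "S \<noteq> {}" and t_Sup: "t = Sup S" unfolding S_def t_def zadeh_ext_def by auto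
  have "bdd_above S"
    unfolding S_def using fuzzy_prod_bounds(2)[of u, OF u] by (auto intro!: bdd_aboveI[of _ 1])
  with \<open>S \<noteq> {}\<close> have "t \<in> closure S" unfolding t_Sup by (rule closure_contains_Sup)
  then obtain s where sS: "\<And>k. s k \<in> S" and s: "s \<longlonglongrightarrow> t"
    unfolding closure_sequential by blast
  have "\<exists>w. f w = y \<and> fuzzy_prod u w = s k" for k
    using sS[of k] unfolding S_def by auto
  then obtain z where zy: "\<And>k. f (z k) = y" and zs: "\<And>k. fuzzy_prod u (z k) = s k" by metis
  obtain N where N: "\<And>k. N \<le> k \<Longrightarrow> 0 < s k"
    using order_tendstoD(1)[OF s] pos t_def by (auto simp: eventually_sequentially)
  have supp: "z (k + N) i \<in> alpha_cut (u i) 0" for k i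
    using N[of "k + N"] zs[of "k + N"] fuzzy_prod_le[of u "z (k + N)" i] by (auto intro: mem_alpha_cut_0)
  obtain r l where r: "strict_mono r" and l: "\<And>i. (\<lambda>k. z (r k + N) i) \<longlonglongrightarrow> l i"
    using compact_product_subseq[of "\<lambda>i. alpha_cut (u i) 0" "\<lambda>k. z (k + N)", OF FX_starD(5)[OF u] supp]
    by blast
  have "(\<lambda>k. f (z (r k + N))) \<longlonglongrightarrow> f l" by (rule tendsto_cont_m[OF f l])
  hence fl: "f l = y" using zy by (simp add: LIMSEQ_const_iff)
  have "(\<lambda>k. fuzzy_prod u (z (r k + N))) \<longlonglongrightarrow> t"
    using LIMSEQ_subseq_LIMSEQ[OF LIMSEQ_ignore_initial_segment[OF s] r] by (simp add: zs o_def)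
  with FX_starD(4)[OF u] l have "t \<le> fuzzy_prod u l" by (rule fuzzy_prod_ge_of_tendsto)
  moreover have "fuzzy_prod u l \<le> t"
    unfolding t_def by (rule zadeh_ext_ge) (use fuzzy_prod_bounds(2)[of u, OF u] fl in auto)
  ultimately show ?thesis using that fl t_def by simp
qed

lemma zadeh_ext_level_set:
  assumes u: "\<And>i. u i \<in> FX_star" and f: "cont_m f" and b: "0 < b"
  shows "{y. b \<le> zadeh_ext f (fuzzy_prod u) y} = f ` {x. \<forall>i. x i \<in> alpha_cut (u i) b}"
proof safe
  fix y assume y: "b \<le> zadeh_ext f (fuzzy_prod u) y"
  with b have "0 < zadeh_ext f (fuzzy_prod u) y" by linarith
  then obtain x where x: "f x = y" "fuzzy_prod u x = zadeh_ext f (fuzzy_prod u) y"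
    by (rule zadeh_ext_attained[of u, OF u f])
  from x(2) y have "b \<le> fuzzy_prod u x" by simp
  with b have "\<forall>i. x i \<in> alpha_cut (u i) b" by (simp add: alpha_cut_pos fuzzy_prod_ge_iff)
  with x(1) show "y \<in> f ` {x. \<forall>i. x i \<in> alpha_cut (u i) b}" by blast
next
  fix x assume "\<forall>i. x i \<in> alpha_cut (u i) b"
  hence "b \<le> fuzzy_prod u x" using b by (auto simp: alpha_cut_pos fuzzy_prod_ge_iff)
  also have "\<dots> \<le> zadeh_ext f (fuzzy_prod u) (f x)"
    by (rule zadeh_ext_ge) (use fuzzy_prod_bounds[of u, OF u] in auto)
  finally show "b \<le> zadeh_ext f (fuzzy_prod u) (f x)" .
qed

lemma zadeh_ext_support:
  assumes u: "\<And>i. u i \<in> FX_star" and f: "cont_m f" and y: "0 < zadeh_ext f (fuzzy_prod u) y"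
  shows "y \<in> f ` {x. \<forall>i. x i \<in> alpha_cut (u i) 0}"
proof -
  obtain x where x: "f x = y" "fuzzy_prod u x = zadeh_ext f (fuzzy_prod u) y"
    by (rule zadeh_ext_attained[of u, OF u f y])
  have "0 < u i (x i)" for i using x(2) y fuzzy_prod_le[of u x i] by linarith
  hence "\<forall>i. x i \<in> alpha_cut (u i) 0" by (simp add: mem_alpha_cut_0)
  with x(1) show ?thesis by blast
qed

lemma fuzzy_prod_cut_approx:
  assumes u: "\<And>i. u i \<in> FX_star" and v: "\<And>i. v i \<in> FX_star"
    and \<beta>: "\<beta> \<in> {0<..1}" and x: "\<beta> \<le> fuzzy_prod u x"
  obtains z where "\<beta> \<le> fuzzy_prod v z" "d_m x z \<le> d_inf_m u v"
proof -
  have "x i \<in> alpha_cut (u i) \<beta>" for i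
    using x \<beta> by (simp add: alpha_cut_pos fuzzy_prod_ge_iff)
  hence "\<exists>w\<in>alpha_cut (v i) \<beta>. dist (x i) w \<le> d_inf (u i) (v i)" for i
    using \<beta> by (intro alpha_cut_approx[OF u v]) auto
  then obtain z where z: "\<And>i. z i \<in> alpha_cut (v i) \<beta>" "\<And>i. dist (x i) (z i) \<le> d_inf (u i) (v i)"
    by metis
  have "\<beta> \<le> fuzzy_prod v z" using z(1) \<beta> by (simp add: alpha_cut_pos fuzzy_prod_ge_iff)
  moreover have "d_m x z \<le> d_inf_m u v"
  proof (unfold d_m_le_iff, intro allI)
    show "dist (x i) (z i) \<le> d_inf_m u v" for i
      using z(2)[of i] d_inf_le_d_inf_m[of u i v] by linarith
  qed
  ultimately show ?thesis by (rule that)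
qed

text \<open>Right continuity puts the infimum of the superlevel set into the set.\<close>

lemma mono_right_continuous_superlevel:
  fixes g :: "real \<Rightarrow> real"
  assumes mono: "mono_on {0..1} g"
    and right_cont: "\<And>t. t \<in> {0..<1} \<Longrightarrow> (g \<longlongrightarrow> g t) (at_right t)"
    and g0: "g 0 < a" and reached: "\<exists>t\<in>{0..1}. a \<le> g t"
  obtains b where "b \<in> {0<..1}" "\<And>t. t \<in> {0..1} \<Longrightarrow> a \<le> g t \<longleftrightarrow> b \<le> t"
proof -
  define S where "S = {t\<in>{0..1}. a \<le> g t}"
  define b where "b = Inf S"
  have S: "S \<noteq> {}" "bdd_below S" using reached unfolding S_def by (auto intro!: bdd_belowI[of _ 0])
  have b_le: "b \<le> t" if "t \<in> S" for t unfolding b_def by (rule cInf_lower[OF that S(2)])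
  have "0 \<le> b" unfolding b_def using S(1) by (intro cInf_greatest) (auto simp: S_def)
  moreover obtain t0 where "t0 \<in> S" using S(1) by blast
  hence "b \<le> 1" using b_le[of t0] by (auto simp: S_def)
  ultimately have b01: "0 \<le> b" "b \<le> 1" by auto
  have above: "t \<in> S" if t: "t \<in> {0..1}" "b < t" for t
  proof -
    obtain s where s: "s \<in> S" "s < t" using cInf_less_iff[OF S] t b_def by auto
    with t mono_onD[OF mono, of s t] show ?thesis unfolding S_def by auto
  qed
  have "b \<in> S"
  proof (rule ccontr)
    assume b_notin: "b \<notin> S"
    with S(1) b_le b01 have "b < 1" unfolding S_def by force
    have "\<forall>\<^sub>F t in at_right b. a \<le> g t"
      using eventually_at_right_real[OF \<open>b < 1\<close>]
      by eventually_elim (use above b01 in \<open>auto simp: S_def\<close>)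
    with right_cont[of b] \<open>b < 1\<close> b01 have "a \<le> g b"
      by (intro tendsto_lowerbound[of g]) auto
    with b_notin b01 show False unfolding S_def by auto
  qed
  moreover from this g0 b01 have "b \<noteq> 0" unfolding S_def by auto
  ultimately have "b \<in> {0<..1}" using b01 by simp
  moreover have "a \<le> g t \<longleftrightarrow> b \<le> t" if "t \<in> {0..1}" for t
    using that b_le above \<open>b \<in> S\<close> unfolding S_def by (cases "t = b") auto
  ultimately show ?thesis by (rule that)
qed

section \<open>The fuzzy operator\<close>

lemma admissible_pos: "admissible n \<rho> \<Longrightarrow> 0 < n"
  unfolding admissible_def by auto

lemma admissibleD:
  assumes "admissible n \<rho>" "j < n"
  shows "\<And>t. t \<in> {0..1} \<Longrightarrow> 0 \<le> \<rho> j t" "\<And>t. t \<in> {0..1} \<Longrightarrow> \<rho> j t \<le> 1"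
    "mono_on {0..1} (\<rho> j)" "\<And>t. t \<in> {0..<1} \<Longrightarrow> (\<rho> j \<longlongrightarrow> \<rho> j t) (at_right t)"
    "\<rho> j 0 = 0"
  using assms unfolding admissible_def by auto

context
  fixes n :: nat and \<phi> :: "nat \<Rightarrow> ('m::finite \<Rightarrow> 'a::metric_space) \<Rightarrow> 'a" and \<rho> :: "nat \<Rightarrow> real \<Rightarrow> real"
  assumes adm: "admissible n \<rho>" and cont: "\<forall>j<n. cont_m (\<phi> j)"
begin

lemma gifzs_op_ge_iff:
  "\<alpha> \<le> gifzs_op n \<phi> \<rho> u y \<longleftrightarrow> (\<exists>j<n. \<alpha> \<le> \<rho> j (zadeh_ext (\<phi> j) (fuzzy_prod u) y))"
  unfolding gifzs_op_def using admissible_pos[OF adm] by (subst Max_ge_iff) auto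

lemma gifzs_op_gt_iff:
  "\<alpha> < gifzs_op n \<phi> \<rho> u y \<longleftrightarrow> (\<exists>j<n. \<alpha> < \<rho> j (zadeh_ext (\<phi> j) (fuzzy_prod u) y))"
  unfolding gifzs_op_def using admissible_pos[OF adm] by (subst Max_gr_iff) auto

context
  fixes u :: "'m \<Rightarrow> 'a \<Rightarrow> real"
  assumes u: "\<And>i. u i \<in> FX_star"
begin

lemma gifzs_op_bounds: "0 \<le> gifzs_op n \<phi> \<rho> u y" "gifzs_op n \<phi> \<rho> u y \<le> 1"
proof -
  have T: "zadeh_ext (\<phi> j) (fuzzy_prod u) y \<in> {0..1}" for j
    using zadeh_ext_prod_bounds[of u "\<phi> j" y, OF u] by simp
  show "0 \<le> gifzs_op n \<phi> \<rho> u y"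
    unfolding gifzs_op_ge_iff using admissible_pos[OF adm] admissibleD(1)[OF adm _ T] by blast
  show "gifzs_op n \<phi> \<rho> u y \<le> 1"
    unfolding gifzs_op_def using admissible_pos[OF adm] admissibleD(2)[OF adm _ T]
    by (subst Max_le_iff) auto
qed

lemma gifzs_op_normal: "\<exists>y. gifzs_op n \<phi> \<rho> u y = 1"
proof -
  obtain j where j: "j < n" "\<rho> j 1 = 1" using adm unfolding admissible_def by auto
  have "\<forall>i. \<exists>z. u i z = 1" using FX_starD(3)[OF u] by blast
  then obtain x where "\<And>i. u i (x i) = 1" by metis
  hence "1 \<le> fuzzy_prod u x" by (simp add: fuzzy_prod_ge_iff)
  also have "\<dots> \<le> zadeh_ext (\<phi> j) (fuzzy_prod u) (\<phi> j x)"
    by (rule zadeh_ext_ge) (use fuzzy_prod_bounds[of u, OF u] in auto)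
  finally have "zadeh_ext (\<phi> j) (fuzzy_prod u) (\<phi> j x) = 1"
    using zadeh_ext_prod_bounds(2)[of u "\<phi> j" "\<phi> j x", OF u] by linarith
  with j have "1 \<le> gifzs_op n \<phi> \<rho> u (\<phi> j x)" unfolding gifzs_op_ge_iff by auto
  with gifzs_op_bounds(2) show ?thesis by (meson order_antisym)
qed

text \<open>For \<open>a > 0\<close> the set \<open>{a \<le> \<rho>\<^sub>j \<circ> T}\<close>, for each term of the maximum, is a level set of the
  Zadeh extension \<open>T\<close> of \<open>\<phi>\<^sub>j\<close>, hence the continuous image of a compact product of level sets.\<close>

lemma usc_gifzs_op: "usc (gifzs_op n \<phi> \<rho> u)"
  unfolding usc_def
proof
  fix a :: real
  show "closed {y. a \<le> gifzs_op n \<phi> \<rho> u y}"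
  proof (cases "a \<le> 0")
    case True
    hence "{y. a \<le> gifzs_op n \<phi> \<rho> u y} = UNIV" by (auto intro: order_trans[OF True gifzs_op_bounds(1)])
    thus ?thesis by simp
  next
    case False
    let ?T = "\<lambda>j. zadeh_ext (\<phi> j) (fuzzy_prod u)"
    have "closed {y. a \<le> \<rho> j (?T j y)}" if j: "j < n" for j
    proof (cases "\<exists>t\<in>{0..1}. a \<le> \<rho> j t")
      case reached: True
      have "\<rho> j 0 < a" using False admissibleD(5)[OF adm j] by simp
      then obtain b
        where b: "b \<in> {0<..1}" and level: "\<And>t. t \<in> {0..1} \<Longrightarrow> a \<le> \<rho> j t \<longleftrightarrow> b \<le> t"
        using mono_right_continuous_superlevel[of "\<rho> j" a] admissibleD(3,4)[OF adm j] reached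
        by blast
      have "a \<le> \<rho> j (?T j y) \<longleftrightarrow> b \<le> ?T j y" for y
        using level zadeh_ext_prod_bounds[of u "\<phi> j" y, OF u] by simp
      hence "{y. a \<le> \<rho> j (?T j y)} = {y. b \<le> ?T j y}" by simp
      also have "\<dots> = \<phi> j ` {x. \<forall>i. x i \<in> alpha_cut (u i) b}"
        using b by (intro zadeh_ext_level_set[of u, OF u cont[rule_format, OF j]]) auto
      finally show ?thesis
        using b u by (auto intro!: compact_imp_closed compact_image_cont_m cont[rule_format, OF j] compact_alpha_cut)
    next
      case False
      have "\<not> a \<le> \<rho> j (?T j y)" for y
        using False zadeh_ext_prod_bounds[of u "\<phi> j" y, OF u] by auto
      hence "{y. a \<le> \<rho> j (?T j y)} = {}" by blast
      thus ?thesis by simp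
    qed
    moreover have "{y. a \<le> gifzs_op n \<phi> \<rho> u y} = (\<Union>j<n. {y. a \<le> \<rho> j (?T j y)})"
      unfolding gifzs_op_ge_iff by auto
    ultimately show ?thesis by (simp add: closed_UN)
  qed
qed

lemma compact_support_gifzs_op: "compact (alpha_cut (gifzs_op n \<phi> \<rho> u) 0)"
proof -
  let ?C = "\<Union>j<n. \<phi> j ` {x. \<forall>i. x i \<in> alpha_cut (u i) 0}"
  have C: "compact ?C"
    using u cont by (auto intro!: compact_UN compact_image_cont_m FX_starD(5))
  have "{y. 0 < gifzs_op n \<phi> \<rho> u y} \<subseteq> ?C"
  proof
    fix y assume "y \<in> {y. 0 < gifzs_op n \<phi> \<rho> u y}"
    then obtain j where j: "j < n" and "0 < \<rho> j (zadeh_ext (\<phi> j) (fuzzy_prod u) y)"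
      unfolding gifzs_op_gt_iff by auto
    with admissibleD(5)[OF adm j] zadeh_ext_prod_bounds(1)[of u, OF u, of "\<phi> j" y]
    have "0 < zadeh_ext (\<phi> j) (fuzzy_prod u) y" by (cases "zadeh_ext (\<phi> j) (fuzzy_prod u) y = 0") auto
    from zadeh_ext_support[of u, OF u cont[rule_format, OF j] this] j show "y \<in> ?C" by blast
  qed
  hence "alpha_cut (gifzs_op n \<phi> \<rho> u) 0 \<subseteq> ?C"
    unfolding alpha_cut_0[of "gifzs_op n \<phi> \<rho> u"] using compact_imp_closed[OF C] by (rule closure_minimal)
  moreover have "compact (?C \<inter> alpha_cut (gifzs_op n \<phi> \<rho> u) 0)"
    by (rule compact_Int_closed[OF C]) (simp add: alpha_cut_0)
  ultimately show ?thesis by (simp add: Int_absorb1)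
qed

lemma gifzs_op_FX_star: "gifzs_op n \<phi> \<rho> u \<in> FX_star"
  unfolding FX_star_def fuzzy_set_def
  by (simp add: gifzs_op_bounds gifzs_op_normal usc_gifzs_op compact_support_gifzs_op)

end

lemma infdist_pos_alpha_cut_gifzs_op_le:
  assumes u: "\<And>i. u i \<in> FX_star" and v: "\<And>i. v i \<in> FX_star"
    and mono: "\<And>j. j < n \<Longrightarrow> mono_on {0..} (\<psi> j)"
    and witness: "\<And>j x x'. j < n \<Longrightarrow> dist (\<phi> j x) (\<phi> j x') \<le> \<psi> j (d_m x x')"
    and c: "\<And>j. j < n \<Longrightarrow> \<psi> j (d_inf_m u v) \<le> c"
    and \<alpha>: "0 < \<alpha>" and y: "y \<in> alpha_cut (gifzs_op n \<phi> \<rho> u) \<alpha>"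
  shows "infdist y (alpha_cut (gifzs_op n \<phi> \<rho> v) \<alpha>) \<le> c"
proof -
  obtain j where j: "j < n" and \<alpha>_le: "\<alpha> \<le> \<rho> j (zadeh_ext (\<phi> j) (fuzzy_prod u) y)"
    using y \<alpha> by (auto simp: alpha_cut_pos gifzs_op_ge_iff)
  define \<beta> where "\<beta> = zadeh_ext (\<phi> j) (fuzzy_prod u) y"
  have \<beta>01: "0 \<le> \<beta>" "\<beta> \<le> 1"
    unfolding \<beta>_def using zadeh_ext_prod_bounds[of u "\<phi> j" y, OF u] by auto
  have "\<beta> \<noteq> 0" using \<alpha> \<alpha>_le admissibleD(5)[OF adm j] unfolding \<beta>_def by auto
  with \<beta>01 have \<beta>_pos: "0 < \<beta>" by simp
  then obtain x where x: "\<phi> j x = y" "fuzzy_prod u x = \<beta>"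
    unfolding \<beta>_def by (rule zadeh_ext_attained[of u, OF u cont[rule_format, OF j]])
  obtain z where z: "\<beta> \<le> fuzzy_prod v z" "d_m x z \<le> d_inf_m u v"
    using fuzzy_prod_cut_approx[of u v \<beta> x, OF u v] \<beta>_pos \<beta>01 x(2) by auto
  have "dist y (\<phi> j z) \<le> \<psi> j (d_m x z)" using witness[OF j, of x z] x(1) by simp
  also have "\<dots> \<le> \<psi> j (d_inf_m u v)"
    using z(2) d_m_nonneg[of x z] by (intro mono_onD[OF mono[OF j]]) auto
  also have "\<dots> \<le> c" by (rule c[OF j])
  finally have dist: "dist y (\<phi> j z) \<le> c" .
  have "\<beta> \<le> zadeh_ext (\<phi> j) (fuzzy_prod v) (\<phi> j z)"
    using z(1) by (rule order_trans) (rule zadeh_ext_ge, use fuzzy_prod_bounds(2)[of v, OF v] in auto)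
  hence "\<rho> j \<beta> \<le> \<rho> j (zadeh_ext (\<phi> j) (fuzzy_prod v) (\<phi> j z))"
    using \<beta>01 zadeh_ext_prod_bounds[of v "\<phi> j" "\<phi> j z", OF v]
    by (intro mono_onD[OF admissibleD(3)[OF adm j]]) auto
  with \<alpha>_le \<alpha> j have "\<phi> j z \<in> alpha_cut (gifzs_op n \<phi> \<rho> v) \<alpha>"
    unfolding \<beta>_def by (auto simp: alpha_cut_pos gifzs_op_ge_iff)
  hence "infdist y (alpha_cut (gifzs_op n \<phi> \<rho> v) \<alpha>) \<le> dist y (\<phi> j z)" by (rule infdist_le)
  with dist show ?thesis by linarith
qed

lemma infdist_alpha_cut_gifzs_op_le:
  assumes u: "\<And>i. u i \<in> FX_star" and v: "\<And>i. v i \<in> FX_star"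
    and mono: "\<And>j. j < n \<Longrightarrow> mono_on {0..} (\<psi> j)"
    and witness: "\<And>j x x'. j < n \<Longrightarrow> dist (\<phi> j x) (\<phi> j x') \<le> \<psi> j (d_m x x')"
    and c: "\<And>j. j < n \<Longrightarrow> \<psi> j (d_inf_m u v) \<le> c"
    and \<alpha>: "\<alpha> \<in> {0..1}" and y: "y \<in> alpha_cut (gifzs_op n \<phi> \<rho> u) \<alpha>"
  shows "infdist y (alpha_cut (gifzs_op n \<phi> \<rho> v) \<alpha>) \<le> c"
proof (cases "\<alpha> = 0")
  case True
  show ?thesis unfolding True
  proof (rule infdist_alpha_cut_0_le)
    show "gifzs_op n \<phi> \<rho> v \<in> FX_star" by (rule gifzs_op_FX_star[OF v])
    show "gifzs_op n \<phi> \<rho> u z \<le> 1" for z by (rule gifzs_op_bounds(2)[OF u])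
    show "y \<in> alpha_cut (gifzs_op n \<phi> \<rho> u) 0" using y True by simp
  qed (rule infdist_pos_alpha_cut_gifzs_op_le[OF u v mono witness c])
next
  case False
  with \<alpha> have "0 < \<alpha>" by simp
  with y show ?thesis using infdist_pos_alpha_cut_gifzs_op_le[OF u v mono witness c] by blast
qed

lemma d_inf_gifzs_op_le:
  assumes u: "\<And>i. u i \<in> FX_star" and v: "\<And>i. v i \<in> FX_star"
    and mono: "\<And>j. j < n \<Longrightarrow> mono_on {0..} (\<psi> j)"
    and witness: "\<And>j x x'. j < n \<Longrightarrow> dist (\<phi> j x) (\<phi> j x') \<le> \<psi> j (d_m x x')"
    and c: "\<And>j. j < n \<Longrightarrow> \<psi> j (d_inf_m u v) \<le> c"
  shows "d_inf (gifzs_op n \<phi> \<rho> u) (gifzs_op n \<phi> \<rho> v) \<le> c"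
  unfolding d_inf_def
proof (rule cSUP_least)
  fix \<alpha> :: real assume \<alpha>: "\<alpha> \<in> {0..1}"
  have c': "\<psi> j (d_inf_m v u) \<le> c" if "j < n" for j using c[OF that] by (simp add: d_inf_m_commute)
  show "hausdorff_dist (alpha_cut (gifzs_op n \<phi> \<rho> u) \<alpha>) (alpha_cut (gifzs_op n \<phi> \<rho> v) \<alpha>) \<le> c"
  proof (rule hausdorff_dist_le)
    show "alpha_cut (gifzs_op n \<phi> \<rho> u) \<alpha> \<noteq> {}" "alpha_cut (gifzs_op n \<phi> \<rho> v) \<alpha> \<noteq> {}"
      using \<alpha> gifzs_op_FX_star[of u, OF u] gifzs_op_FX_star[of v, OF v]
      by (auto dest: alpha_cut_nonempty)
  qed (use \<alpha> in \<open>auto intro: infdist_alpha_cut_gifzs_op_le[OF u v mono witness c]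
      infdist_alpha_cut_gifzs_op_le[OF v u mono witness c']\<close>)
qed simp

lemma d_inf_gifzs_op_le_Max_witness:
  assumes u: "\<And>i. u i \<in> FX_star" and v: "\<And>i. v i \<in> FX_star"
    and witness: "\<forall>j<n. matkowski_witness_m (\<psi> j) (\<phi> j)"
  shows "d_inf (gifzs_op n \<phi> \<rho> u) (gifzs_op n \<phi> \<rho> v) \<le> Max ((\<lambda>j. \<psi> j (d_inf_m u v)) ` {..<n})"
  using witness admissible_pos[OF adm]
  by (intro d_inf_gifzs_op_le[OF u v]) (auto simp: matkowski_witness_m_def matkowski_fun_def)

lemma d_inf_gifzs_op_le_Max_Lip_m:
  assumes u: "\<And>i. u i \<in> FX_star" and v: "\<And>i. v i \<in> FX_star"
    and lip: "\<forall>j<n. lipschitz_m (\<phi> j)"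
  shows "d_inf (gifzs_op n \<phi> \<rho> u) (gifzs_op n \<phi> \<rho> v) \<le> Max ((\<lambda>j. Lip_m (\<phi> j)) ` {..<n}) * d_inf_m u v"
proof (rule d_inf_gifzs_op_le[OF u v])
  fix j assume j: "j < n"
  with lip show "mono_on {0..} (\<lambda>t. Lip_m (\<phi> j) * t)"
    by (auto intro!: mono_onI mult_left_mono Lip_m_nonneg)
  show "dist (\<phi> j x) (\<phi> j x') \<le> Lip_m (\<phi> j) * d_m x x'" for x x'
    using lip j by (simp add: dist_le_Lip_m)
  show "Lip_m (\<phi> j) * d_inf_m u v \<le> Max ((\<lambda>j. Lip_m (\<phi> j)) ` {..<n}) * d_inf_m u v"
    using j d_inf_m_nonneg[OF u v] by (intro mult_right_mono) auto
qed

end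

theorem mainTheorem11:
  fixes n :: nat
    and \<phi> :: "nat \<Rightarrow> ('m::finite \<Rightarrow> 'a::metric_space) \<Rightarrow> 'a"
    and \<rho> :: "nat \<Rightarrow> real \<Rightarrow> real"
    and \<psi> :: "nat \<Rightarrow> real \<Rightarrow> real"
  assumes cont: "\<forall>j<n. cont_m (\<phi> j)"
    and adm: "admissible n \<rho>"
  shows
    "((\<forall>j<n. matkowski_witness_m (\<psi> j) (\<phi> j)) \<longrightarrow>
        matkowski_fun (\<lambda>t. Max ((\<lambda>j. \<psi> j t) ` {..<n})) \<and>
        (\<forall>u v. (\<forall>i. u i \<in> FX_star) \<and> (\<forall>i. v i \<in> FX_star) \<longrightarrow>
           gifzs_op n \<phi> \<rho> u \<in> FX_star \<and>
           d_inf (gifzs_op n \<phi> \<rho> u) (gifzs_op n \<phi> \<rho> v)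
             \<le> Max ((\<lambda>j. \<psi> j (d_inf_m u v)) ` {..<n})))
     \<and>
     ((\<forall>j<n. lipschitz_m (\<phi> j) \<and> Lip_m (\<phi> j) < 1) \<longrightarrow>
        Max ((\<lambda>j. Lip_m (\<phi> j)) ` {..<n}) < 1 \<and>
        (\<forall>u v. (\<forall>i. u i \<in> FX_star) \<and> (\<forall>i. v i \<in> FX_star) \<longrightarrow>
           d_inf (gifzs_op n \<phi> \<rho> u) (gifzs_op n \<phi> \<rho> v)
             \<le> Max ((\<lambda>j. Lip_m (\<phi> j)) ` {..<n}) * d_inf_m u v))"
proof (intro conjI impI allI)
  have J: "finite {..<n}" "{..<n} \<noteq> {}" using admissible_pos[OF adm] by auto
  fix u v :: "'m \<Rightarrow> 'a \<Rightarrow> real"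
  {
    assume witness: "\<forall>j<n. matkowski_witness_m (\<psi> j) (\<phi> j)"
    thus "matkowski_fun (\<lambda>t. Max ((\<lambda>j. \<psi> j t) ` {..<n}))"
      using J by (intro matkowski_fun_Max) (auto simp: matkowski_witness_m_def)
    assume "(\<forall>i. u i \<in> FX_star) \<and> (\<forall>i. v i \<in> FX_star)"
    hence u: "\<And>i. u i \<in> FX_star" and v: "\<And>i. v i \<in> FX_star" by auto
    show "gifzs_op n \<phi> \<rho> u \<in> FX_star" by (rule gifzs_op_FX_star[OF adm cont u])
    show "d_inf (gifzs_op n \<phi> \<rho> u) (gifzs_op n \<phi> \<rho> v) \<le> Max ((\<lambda>j. \<psi> j (d_inf_m u v)) ` {..<n})"
      by (rule d_inf_gifzs_op_le_Max_witness[OF adm cont u v witness])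
  }
  {
    assume lip: "\<forall>j<n. lipschitz_m (\<phi> j) \<and> Lip_m (\<phi> j) < 1"
    thus "Max ((\<lambda>j. Lip_m (\<phi> j)) ` {..<n}) < 1" using J by simp
    assume "(\<forall>i. u i \<in> FX_star) \<and> (\<forall>i. v i \<in> FX_star)"
    hence u: "\<And>i. u i \<in> FX_star" and v: "\<And>i. v i \<in> FX_star" by auto
    show "d_inf (gifzs_op n \<phi> \<rho> u) (gifzs_op n \<phi> \<rho> v) \<le> Max ((\<lambda>j. Lip_m (\<phi> j)) ` {..<n}) * d_inf_m u v"
      using lip by (intro d_inf_gifzs_op_le_Max_Lip_m[OF adm cont u v]) simp
  }
qed

end
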